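(* Consider a system of $M$ conservation laws with state space $\mathcal D\subset\mathbb R^M$, interface-normal flux $\mathbf f:\mathcal D\to\mathbb R^M$, entropy variables $\mathbf v=(v^1,\dots,v^M):\mathcal D\to\mathbb R^M$ and entropy flux potential $\Psi:\mathcal D\to\mathbb R$, and let $\mathbf f^{\mathrm{EC}}=(f^{\mathrm{EC},1},\dots,f^{\mathrm{EC},M}):\mathcal D\times\mathcal D\to\mathbb R^M$ be an entropy conservative two-point flux, i.e. $(\mathbf v(\mathbf u_R)-\mathbf v(\mathbf u_L))^T\mathbf f^{\mathrm{EC}}(\mathbf u_L,\mathbf u_R)=\Psi(\mathbf u_R)-\Psi(\mathbf u_L)$ for all $\mathbf u_L,\mathbf u_R\in\mathcal D$. Let $N_L,N_R\ge1$, let $\mathbf M_L\in\mathbb R^{(N_L+1)\times(N_L+1)}$, $\mathbf M_R\in\mathbb R^{(N_R+1)\times(N_R+1)}$ be diagonal with positive diagonal entries, and let $\mathbf P_{L2R}\in\mathbb R^{(N_R+1)\times(N_L+1)}$, $\mathbf P_{R2L}\in\mathbb R^{(N_L+1)\times(N_R+1)}$ satisfy $\mathbf P_{R2L}^T\mathbf M_L=\mathbf M_R\mathbf P_{L2R}$, $\mathbf P_{L2R}\mathbf 1^L=\mathbf 1^R$ and $\mathbf P_{R2L}\mathbf 1^R=\mathbf 1^L$. Let $\mathbf U^L_0,\dots,\mathbf U^L_{N_L}\in\mathcal D$ and $\mathbf U^R_0,\dots,\mathbf U^R_{N_R}\in\mathcal D$ be arbitrary (the left and right interface states). For $q=1,\dots,M$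 define $\mathbf F^q\in\mathbb R^{(N_L+1)\times(N_R+1)}$ by $[\mathbf F^q]_{ij}=f^{\mathrm{EC},q}(\mathbf U^L_i,\mathbf U^R_j)$ and the numerical surface fluxes $$\mathbf F^{q,L}:=\mathbb E\big(\mathbf P_{R2L}(\mathbf F^q)^T\big)\in\mathbb R^{N_L+1},\qquad \mathbf F^{q,R}:=\mathbb E\big(\mathbf P_{L2R}\mathbf F^q\big)\in\mathbb R^{N_R+1},$$ i.e. $F^{q,L}_i=\sum_{j=0}^{N_R}[\mathbf P_{R2L}]_{ij}f^{\mathrm{EC},q}(\mathbf U^L_i,\mathbf U^R_j)$ and $F^{q,R}_j=\sum_{i=0}^{N_L}[\mathbf P_{L2R}]_{ji}f^{\mathrm{EC},q}(\mathbf U^L_i,\mathbf U^R_j)$. Let $V^{q,L}_i=v^q(\mathbf U^L_i)$, $\Psi^L_i=\Psi(\mathbf U^L_i)$, $V^{q,R}_j=v^q(\mathbf U^R_j)$, $\Psi^R_j=\Psi(\mathbf U^R_j)$. Then these fluxes are primary and entropy conservative at the interface: for every $q=1,\dots,M$, $$\Delta U^q:=(\mathbf 1^R)^T\mathbf M_R\mathbf F^{q,R}-(\mathbf 1^L)^T\mathbf M_L\mathbf F^{q,L}=0,$$ and $$\Delta S:=\sum_{q=1}^M(\mathbf V^{q,R})^T\mathbf M_R\mathbf F^{q,R}-(\mathbf 1^R)^T\mathbf M_R\boldsymbol\Psi^R-\sum_{q=1}^M(\mathbf V^{q,L})^T\mathbf M_L\mathbf F^{q,L}+(\mathbf 1^L)^T\mathbf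 M_L\boldsymbol\Psi^L=0.$$
   Context: Setting: a nodal discontinuous Galerkin spectral element method (collocated on Legendre–Gauss–Lobatto nodes, so derivative/mass matrices satisfy the summation-by-parts property) for a hyperbolic system $\mathbf u_t+\mathbf f(\mathbf u)_x+\mathbf g(\mathbf u)_y=0$ with a strongly convex entropy $S(\mathbf u)$, entropy variables $\mathbf v=\partial S/\partial\mathbf u$, entropy flux $F$ (with $\mathbf v^T\mathbf f'(\mathbf u)=F'(\mathbf u)$) and entropy flux potential $\Psi=\mathbf v\cdot\mathbf f-F$. Two neighboring elements $L$ (left) and $R$ (right) share one full interface edge (same edge length, no hanging nodes) but may have different polynomial degrees $N_L,N_R$; $\mathbf M_L,\mathbf M_R$ are their 1D quadrature weight matrices on the interface. When entropy conservative volume fluxes are used, the rate of change of the total integral of the $q$-th conserved variable and of the total entropy receive, from this interface, exactly the contributions $\Delta U^q$ and $\Delta S$ (up to a common positive geometric factor); "primary and entropy conservative" means these vanish. Notation: for a square matrix $\mathbf W$, $\mathbb E(\mathbf W)$ is the vector of its diagonal entries; $\mathbf 1^L\in\mathbb R^{N_L+1}$, $\mathbf 1^R\in\mathbb R^{N_R+1}$ are all-ones vectors; $\boldsymbol\Psi^L,\boldsymbol\Psi^R,\mathbf V^{q,L},\mathbf V^{q,R}$ are the vectors with the indicated entries. *)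

theory Defs
  imports "HOL-Analysis.Analysis"
begin

text \<open>Finite-dimensional vectors/matrices of varying size are represented by
 index functions (nat-indexed, 0-based) with explicit bounds. \<close>

definition pos_diag :: "nat \<Rightarrow> (nat \<Rightarrow> nat \<Rightarrow> real) \<Rightarrow> bool" where
  "pos_diag n W \<longleftrightarrow> (\<forall>i\<le>n. \<forall>j\<le>n. i \<noteq> j \<longrightarrow> W i j = 0) \<and> (\<forall>i\<le>n. W i i > 0)"

definition entropy_conservative ::
  "nat \<Rightarrow> 'a set \<Rightarrow> ('a \<Rightarrow> nat \<Rightarrow> real) \<Rightarrow> ('a \<Rightarrow> real) \<Rightarrow> ('a \<Rightarrow> 'a \<Rightarrow> nat \<Rightarrow> real) \<Rightarrow> bool" where
  "entropy_conservative m D v Psi fEC \<longleftrightarrow>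
     (\<forall>uL\<in>D. \<forall>uR\<in>D. (\<Sum>q=1..m. (v uR q - v uL q) * fEC uL uR q) = Psi uR - Psi uL)"

end

theory Submission
  imports Defs
begin

text \<open>Diagonality of the mass matrices together with \<open>P\<^sub>R\<^sub>2\<^sub>L\<^sup>T M\<^sub>L = M\<^sub>R P\<^sub>L\<^sub>2\<^sub>R\<close> means that
  \<open>c\<^sub>i\<^sub>j = (M\<^sub>L)\<^sub>i\<^sub>i (P\<^sub>R\<^sub>2\<^sub>L)\<^sub>i\<^sub>j = (M\<^sub>R)\<^sub>j\<^sub>j (P\<^sub>L\<^sub>2\<^sub>R)\<^sub>j\<^sub>i\<close> is one coupling weight seen from either
  side. Every term of \<open>\<Delta>U\<^sup>q\<close> and \<open>\<Delta>S\<close> is a \<open>c\<close>-weighted double sum over the node pairs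
  \<open>(i, j)\<close>; the Psi terms become such sums because the projections preserve constants.
  Primary conservation is then the equality of two such sums, and \<open>\<Delta>S\<close> is the
  \<open>c\<close>-weighted sum of the two-point entropy conservation defects, which all vanish.\<close>

definition diagonal_mat :: "nat \<Rightarrow> (nat \<Rightarrow> nat \<Rightarrow> 'a::zero) \<Rightarrow> bool" where
  "diagonal_mat n W \<longleftrightarrow> (\<forall>i\<le>n. \<forall>j\<le>n. i \<noteq> j \<longrightarrow> W i j = 0)"

lemma pos_diag_imp_diagonal_mat: "pos_diag n W \<Longrightarrow> diagonal_mat n W"
  by (simp add: pos_diag_def diagonal_mat_def)

lemma diagonal_mat_sum_row:
  fixes W :: "nat \<Rightarrow> nat \<Rightarrow> 'a::semiring_0"
  assumes "diagonal_mat n W" "i \<le> n"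
  shows "(\<Sum>k=0..n. W i k * b k) = W i i * b i"
  using assms by (subst sum.mono_neutral_right[where S = "{i}"]) (auto simp: diagonal_mat_def)

lemma diagonal_mat_sum_col:
  fixes W :: "nat \<Rightarrow> nat \<Rightarrow> 'a::semiring_0"
  assumes "diagonal_mat n W" "i \<le> n"
  shows "(\<Sum>k=0..n. a k * W k i) = a i * W i i"
  using assms by (subst sum.mono_neutral_right[where S = "{i}"]) (auto simp: diagonal_mat_def)

lemma diagonal_mat_double_sum:
  fixes W :: "nat \<Rightarrow> nat \<Rightarrow> 'a::comm_semiring_0"
  assumes "diagonal_mat n W"
  shows "(\<Sum>j=0..n. \<Sum>k=0..n. a j * W j k * g k) = (\<Sum>k=0..n. W k k * (a k * g k))"
  using diagonal_mat_sum_row[OF assms]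
  by (intro sum.cong refl) (simp add: mult.assoc mult.left_commute flip: sum_distrib_left)

lemma mass_compatible_coupling:
  fixes WL WR PL2R PR2L :: "nat \<Rightarrow> nat \<Rightarrow> 'a::comm_semiring_0"
  assumes "diagonal_mat NL WL" "diagonal_mat NR WR"
    and "(\<Sum>k=0..NL. PR2L k j * WL k i) = (\<Sum>k=0..NR. WR j k * PL2R k i)"
    and "i \<le> NL" "j \<le> NR"
  shows "WR j j * PL2R j i = WL i i * PR2L i j"
  using assms diagonal_mat_sum_col[OF assms(1,4), of "\<lambda>k. PR2L k j"]
    diagonal_mat_sum_row[OF assms(2,5), of "\<lambda>k. PL2R k i"]
  by (simp add: mult.commute)

lemma coupled_sum_right:
  fixes WL WR PL2R PR2L :: "nat \<Rightarrow> nat \<Rightarrow> 'a::comm_semiring_0"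
  assumes "diagonal_mat NR WR"
    and coupling: "\<And>i j. i \<le> NL \<Longrightarrow> j \<le> NR \<Longrightarrow> WR j j * PL2R j i = WL i i * PR2L i j"
  shows "(\<Sum>j=0..NR. \<Sum>k=0..NR. a j * WR j k * (\<Sum>i=0..NL. PL2R k i * g i k))
       = (\<Sum>i=0..NL. \<Sum>j=0..NR. WL i i * PR2L i j * (a j * g i j))"
proof -
  have "(\<Sum>j=0..NR. \<Sum>k=0..NR. a j * WR j k * (\<Sum>i=0..NL. PL2R k i * g i k))
      = (\<Sum>j=0..NR. \<Sum>i=0..NL. (WR j j * PL2R j i) * (a j * g i j))"
    by (subst diagonal_mat_double_sum[OF assms(1)]) (simp add: sum_distrib_left mult_ac)
  also have "\<dots> = (\<Sum>j=0..NR. \<Sum>i=0..NL. WL i i * PR2L i j * (a j * g i j))"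
    using coupling by (intro sum.cong refl) auto
  also have "\<dots> = (\<Sum>i=0..NL. \<Sum>j=0..NR. WL i i * PR2L i j * (a j * g i j))"
    by (rule sum.swap)
  finally show ?thesis .
qed

lemma coupled_sum_left:
  fixes WL PR2L :: "nat \<Rightarrow> nat \<Rightarrow> 'a::comm_semiring_0"
  assumes "diagonal_mat NL WL"
  shows "(\<Sum>i=0..NL. \<Sum>k=0..NL. b i * WL i k * (\<Sum>j=0..NR. PR2L k j * g k j))
       = (\<Sum>i=0..NL. \<Sum>j=0..NR. WL i i * PR2L i j * (b i * g i j))"
  by (subst diagonal_mat_double_sum[OF assms]) (simp add: sum_distrib_left mult_ac)

lemma coupled_mass_right:
  fixes WL WR PL2R PR2L :: "nat \<Rightarrow> nat \<Rightarrow> 'a::comm_semiring_1"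
  assumes "diagonal_mat NR WR"
    and "\<And>i j. i \<le> NL \<Longrightarrow> j \<le> NR \<Longrightarrow> WR j j * PL2R j i = WL i i * PR2L i j"
    and rows: "\<forall>j\<le>NR. (\<Sum>i=0..NL. PL2R j i) = 1"
  shows "(\<Sum>j=0..NR. \<Sum>k=0..NR. WR j k * h k) = (\<Sum>i=0..NL. \<Sum>j=0..NR. WL i i * PR2L i j * h j)"
proof -
  have "(\<Sum>j=0..NR. \<Sum>k=0..NR. WR j k * h k)
      = (\<Sum>j=0..NR. \<Sum>k=0..NR. 1 * WR j k * (\<Sum>i=0..NL. PL2R k i * h k))"
    using rows by (intro sum.cong refl) (simp flip: sum_distrib_right)
  also have "\<dots> = (\<Sum>i=0..NL. \<Sum>j=0..NR. WL i i * PR2L i j * h j)"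
    using coupled_sum_right[where a = "\<lambda>_. 1" and g = "\<lambda>_ k. h k" and NL = NL and PL2R = PL2R
        and WL = WL and PR2L = PR2L] assms(1,2)
    by simp
  finally show ?thesis .
qed

lemma coupled_mass_left:
  fixes WL PR2L :: "nat \<Rightarrow> nat \<Rightarrow> 'a::comm_semiring_1"
  assumes "diagonal_mat NL WL"
    and rows: "\<forall>i\<le>NL. (\<Sum>j=0..NR. PR2L i j) = 1"
  shows "(\<Sum>i=0..NL. \<Sum>k=0..NL. WL i k * h k) = (\<Sum>i=0..NL. \<Sum>j=0..NR. WL i i * PR2L i j * h i)"
proof -
  have "(\<Sum>i=0..NL. \<Sum>k=0..NL. WL i k * h k)
      = (\<Sum>i=0..NL. \<Sum>k=0..NL. 1 * WL i k * (\<Sum>j=0..NR. PR2L k j * h k))"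
    using rows by (intro sum.cong refl) (simp flip: sum_distrib_right)
  also have "\<dots> = (\<Sum>i=0..NL. \<Sum>j=0..NR. WL i i * PR2L i j * h i)"
    using coupled_sum_left[OF assms(1), where b = "\<lambda>_. 1" and NR = NR and PR2L = PR2L and g = "\<lambda>k _. h k"] by simp
  finally show ?thesis .
qed

lemma coupled_entropy_defects_vanish:
  fixes c :: "nat \<Rightarrow> nat \<Rightarrow> 'a::comm_ring"
  assumes "\<And>i j. i \<in> I \<Longrightarrow> j \<in> J \<Longrightarrow> (\<Sum>q\<in>Q. (x j q - y i q) * f i j q) = p j - r i"
  shows "(\<Sum>q\<in>Q. \<Sum>i\<in>I. \<Sum>j\<in>J. c i j * (x j q * f i j q))
       - (\<Sum>i\<in>I. \<Sum>j\<in>J. c i j * p j)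
       - (\<Sum>q\<in>Q. \<Sum>i\<in>I. \<Sum>j\<in>J. c i j * (y i q * f i j q))
       + (\<Sum>i\<in>I. \<Sum>j\<in>J. c i j * r i) = 0"
proof -
  have "(\<Sum>q\<in>Q. \<Sum>i\<in>I. \<Sum>j\<in>J. c i j * (x j q * f i j q))
       - (\<Sum>q\<in>Q. \<Sum>i\<in>I. \<Sum>j\<in>J. c i j * (y i q * f i j q))
      = (\<Sum>i\<in>I. \<Sum>j\<in>J. c i j * (\<Sum>q\<in>Q. (x j q - y i q) * f i j q))"
    by (simp add: sum_distrib_left algebra_simps sum_subtractf sum.swap[of _ Q])
  also have "\<dots> = (\<Sum>i\<in>I. \<Sum>j\<in>J. c i j * p j) - (\<Sum>i\<in>I. \<Sum>j\<in>J. c i j * r i)"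
    using assms by (simp add: right_diff_distrib sum_subtractf)
  finally show ?thesis
    by (simp add: algebra_simps)
qed

theorem theorem1:
  fixes m NL NR :: nat
    and D :: "'a set"
    and v :: "'a \<Rightarrow> nat \<Rightarrow> real"
    and Psi :: "'a \<Rightarrow> real"
    and fEC :: "'a \<Rightarrow> 'a \<Rightarrow> nat \<Rightarrow> real"
    and WL WR PL2R PR2L :: "nat \<Rightarrow> nat \<Rightarrow> real"
    and UL UR :: "nat \<Rightarrow> 'a"
  assumes EC: "entropy_conservative m D v Psi fEC"
    and NL: "NL \<ge> 1" and NR: "NR \<ge> 1"
    and massL_diag: "pos_diag NL WL" and massR_diag: "pos_diag NR WR"
    and compat: "\<forall>i\<le>NR. \<forall>j\<le>NL.
        (\<Sum>k=0..NL. PR2L k i * WL k j) = (\<Sum>k=0..NR. WR i k * PL2R k j)"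
    and PL2R_one: "\<forall>j\<le>NR. (\<Sum>i=0..NL. PL2R j i) = 1"
    and PR2L_one: "\<forall>i\<le>NL. (\<Sum>j=0..NR. PR2L i j) = 1"
    and UL_D: "\<forall>i\<le>NL. UL i \<in> D"
    and UR_D: "\<forall>j\<le>NR. UR j \<in> D"
  defines "FL \<equiv> (\<lambda>q i. \<Sum>j=0..NR. PR2L i j * fEC (UL i) (UR j) q)"
    and "FR \<equiv> (\<lambda>q j. \<Sum>i=0..NL. PL2R j i * fEC (UL i) (UR j) q)"
  shows "(\<forall>q\<in>{1..m}.
           (\<Sum>j=0..NR. \<Sum>k=0..NR. WR j k * FR q k)
         - (\<Sum>i=0..NL. \<Sum>k=0..NL. WL i k * FL q k) = 0)
       \<and> (\<Sum>q=1..m. \<Sum>j=0..NR. \<Sum>k=0..NR. v (UR j) q * WR j k * FR q k)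
         - (\<Sum>j=0..NR. \<Sum>k=0..NR. WR j k * Psi (UR k))
         - (\<Sum>q=1..m. \<Sum>i=0..NL. \<Sum>k=0..NL. v (UL i) q * WL i k * FL q k)
         + (\<Sum>i=0..NL. \<Sum>k=0..NL. WL i k * Psi (UL k)) = 0"
proof -
  note diagL = pos_diag_imp_diagonal_mat[OF massL_diag]
  note diagR = pos_diag_imp_diagonal_mat[OF massR_diag]
  have coupling: "WR j j * PL2R j i = WL i i * PR2L i j" if "i \<le> NL" "j \<le> NR" for i j
    using mass_compatible_coupling[OF diagL diagR _ that] compat that by blast
  have right: "(\<Sum>j=0..NR. \<Sum>k=0..NR. a j * WR j k * FR q k)
      = (\<Sum>i=0..NL. \<Sum>j=0..NR. WL i i * PR2L i j * (a j * fEC (UL i) (UR j) q))" for a q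
    unfolding FR_def by (intro coupled_sum_right[OF diagR] coupling)
  have left: "(\<Sum>i=0..NL. \<Sum>k=0..NL. b i * WL i k * FL q k)
      = (\<Sum>i=0..NL. \<Sum>j=0..NR. WL i i * PR2L i j * (b i * fEC (UL i) (UR j) q))" for b q
    unfolding FL_def by (rule coupled_sum_left[OF diagL])
  have primary: "\<forall>q\<in>{1..m}.
      (\<Sum>j=0..NR. \<Sum>k=0..NR. WR j k * FR q k) - (\<Sum>i=0..NL. \<Sum>k=0..NL. WL i k * FL q k) = 0"
    using right[where a = "\<lambda>_. 1"] left[where b = "\<lambda>_. 1"] by simp
  have defect: "(\<Sum>q=1..m. (v (UR j) q - v (UL i) q) * fEC (UL i) (UR j) q) = Psi (UR j) - Psi (UL i)"
    if "i \<in> {0..NL}" "j \<in> {0..NR}" for i j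
    using EC UL_D UR_D that by (simp add: entropy_conservative_def)
  show ?thesis
    using primary coupled_entropy_defects_vanish[OF defect, where c = "\<lambda>i j. WL i i * PR2L i j"]
    by (simp only: right left coupled_mass_right[where WL = WL and PR2L = PR2L, OF diagR coupling PL2R_one]
        coupled_mass_left[OF diagL PR2L_one])
qed

end
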